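(* Let $(F,v)$ be a Krasner valued hyperfield whose norm $\rho_v$ has trivial invariance group, i.e. $\mathrm{ig}(\rho_v)=\{0\}$. Then $\mathcal{O}_v=\{x\in F: x-x\subseteq 1-1\}$.
   Context: A hyperfield is $(F,+,\cdot,0,1)$ with $+$ a multivalued operation making $(F,+,0)$ a canonical hypergroup (associative, commutative, unique inverses $-x$ with $0\in x+(-x)$, and $z\in x+y\Rightarrow y\in z+(-x)$; write $x-y:=x+(-y)$, $A+B:=\bigcup_{a\in A,b\in B}a+b$), $(F,\cdot)$ commutative with $0$ absorbing, $x(y+z)=xy+xz$, and $F\setminus\{0\}$ an abelian group with neutral $1\neq0$. Valuation on $F$: for an ordered abelian group $\Gamma$ and $\infty>\Gamma$ with $\gamma+\infty=\infty+\gamma=\infty$, a surjective map $v:F\to\Gamma\cup\{\infty\}$ with $vx=\infty\iff x=0$, $v(xy)=vx+vy$, $z\in x+y\Rightarrow vz\ge\min\{vx,vy\}$; $vF:=v(F\setminus\{0\})$, $\mathcal{O}_v:=\{x:vx\ge0\}$. An initial segment of $\Gamma$ is $\rho\subseteq\Gamma$ with $\delta\in\rho,\gamma<\delta\Rightarrow\gamma\in\rho$; $\rho+\gamma:=\{\delta+\gamma:\delta\in\rho\}$; "$\alpha>\rho+\gamma$" means $\alpha\notin\rho+\gamma$; $\mathrm{ig}(\rho):=\{\gamma\in\Gamma:\rho+\gamma=\rho\}$. Krasner valued hyperfield: a valued hyperfield $(F,v)$ such that (KVH1) for all $x,y\in F$ with $0\notin x+y$, $v(x+y)$ is a singleton;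 (KVH2) there is an initial segment $\rho_v$ of $vF$ with $0\in\rho_v$ (the norm) such that for all $x,y,z,t\in F$ with $z\in x+y$: $t\in x+y$ iff $vs>\rho_v+\min\{vx,vy\}$ for all $s\in z-t$. *)

theory Defs
  imports Main
begin

(* A hyperfield is given on the whole type 'a by a multivalued addition add,
   a multiplication mul, and constants zero, one. *)

definition set_add :: "('a \<Rightarrow> 'a \<Rightarrow> 'a set) \<Rightarrow> 'a set \<Rightarrow> 'a set \<Rightarrow> 'a set" where
  "set_add add A B = (\<Union>a\<in>A. \<Union>b\<in>B. add a b)"

definition hneg :: "('a \<Rightarrow> 'a \<Rightarrow> 'a set) \<Rightarrow> 'a \<Rightarrow> 'a \<Rightarrow> 'a" where
  "hneg add zero x = (THE y. zero \<in> add x y)"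

definition hsub :: "('a \<Rightarrow> 'a \<Rightarrow> 'a set) \<Rightarrow> 'a \<Rightarrow> 'a \<Rightarrow> 'a \<Rightarrow> 'a set" where
  "hsub add zero x y = add x (hneg add zero y)"

definition canonical_hypergroup :: "('a \<Rightarrow> 'a \<Rightarrow> 'a set) \<Rightarrow> 'a \<Rightarrow> bool" where
  "canonical_hypergroup add zero \<longleftrightarrow>
     (\<forall>x y. add x y \<noteq> {}) \<and>
     (\<forall>x y z. set_add add (add x y) {z} = set_add add {x} (add y z)) \<and>
     (\<forall>x y. add x y = add y x) \<and>
     (\<forall>x. add zero x = {x}) \<and>
     (\<forall>x. \<exists>!y. zero \<in> add x y) \<and>
     (\<forall>x y z. z \<in> add x y \<longrightarrow> y \<in> add z (hneg add zero x))"

definition hyperfield ::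
  "('a \<Rightarrow> 'a \<Rightarrow> 'a set) \<Rightarrow> ('a \<Rightarrow> 'a \<Rightarrow> 'a) \<Rightarrow> 'a \<Rightarrow> 'a \<Rightarrow> bool" where
  "hyperfield add mul zero one \<longleftrightarrow>
     canonical_hypergroup add zero \<and>
     (\<forall>x y. mul x y = mul y x) \<and>
     (\<forall>x y z. mul (mul x y) z = mul x (mul y z)) \<and>
     (\<forall>x. mul zero x = zero) \<and>
     (\<forall>x y z. mul x ` add y z = set_add add {mul x y} {mul x z}) \<and>
     one \<noteq> zero \<and>
     (\<forall>x y. x \<noteq> zero \<longrightarrow> y \<noteq> zero \<longrightarrow> mul x y \<noteq> zero) \<and>
     (\<forall>x. mul one x = x) \<and>
     (\<forall>x. x \<noteq> zero \<longrightarrow> (\<exists>y. y \<noteq> zero \<and> mul x y = one))"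

(* Values in \<Gamma> \<union> {\<infinity>} are represented as 'g option, None = \<infinity>. *)
fun ext_le :: "'g::linorder option \<Rightarrow> 'g option \<Rightarrow> bool" where
  "ext_le _ None = True"
| "ext_le None (Some _) = False"
| "ext_le (Some a) (Some b) = (a \<le> b)"

fun ext_min :: "'g::linorder option \<Rightarrow> 'g option \<Rightarrow> 'g option" where
  "ext_min None b = b"
| "ext_min a None = a"
| "ext_min (Some a) (Some b) = Some (min a b)"

definition valuation ::
  "('a \<Rightarrow> 'a \<Rightarrow> 'a set) \<Rightarrow> ('a \<Rightarrow> 'a \<Rightarrow> 'a) \<Rightarrow> 'a \<Rightarrow> 'a \<Rightarrow>
   ('a \<Rightarrow> 'g::linordered_ab_group_add option) \<Rightarrow> bool" where
  "valuation add mul zero one v \<longleftrightarrow>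
     surj v \<and>
     (\<forall>x. v x = None \<longleftrightarrow> x = zero) \<and>
     (\<forall>x y a b. v x = Some a \<longrightarrow> v y = Some b \<longrightarrow> v (mul x y) = Some (a + b)) \<and>
     (\<forall>x y z. z \<in> add x y \<longrightarrow> ext_le (ext_min (v x) (v y)) (v z))"

definition valued_hyperfield ::
  "('a \<Rightarrow> 'a \<Rightarrow> 'a set) \<Rightarrow> ('a \<Rightarrow> 'a \<Rightarrow> 'a) \<Rightarrow> 'a \<Rightarrow> 'a \<Rightarrow>
   ('a \<Rightarrow> 'g::linordered_ab_group_add option) \<Rightarrow> bool" where
  "valued_hyperfield add mul zero one v \<longleftrightarrow>
     hyperfield add mul zero one \<and> valuation add mul zero one v"

(* initial segment of \<Gamma> (= vF by surjectivity) *)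
definition initial_segment :: "'g::linorder set \<Rightarrow> bool" where
  "initial_segment \<rho> \<longleftrightarrow> (\<forall>\<delta> \<gamma>. \<delta> \<in> \<rho> \<longrightarrow> \<gamma> < \<delta> \<longrightarrow> \<gamma> \<in> \<rho>)"

definition seg_shift :: "'g::ab_group_add set \<Rightarrow> 'g \<Rightarrow> 'g set" where
  "seg_shift \<rho> \<gamma> = (\<lambda>\<delta>. \<delta> + \<gamma>) ` \<rho>"

(* "\<alpha> > \<rho> + \<gamma>" means \<alpha> \<notin> \<rho> + \<gamma>; for \<alpha> = \<infinity> this always holds *)
fun above_seg :: "'g::ab_group_add option \<Rightarrow> 'g set \<Rightarrow> 'g \<Rightarrow> bool" where
  "above_seg None \<rho> \<gamma> = True"
| "above_seg (Some a) \<rho> \<gamma> = (a \<notin> seg_shift \<rho> \<gamma>)"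

definition ig :: "'g::ab_group_add set \<Rightarrow> 'g set" where
  "ig \<rho> = {\<gamma>. seg_shift \<rho> \<gamma> = \<rho>}"

(* KVH2 for a given norm \<rho>.  Only pairs x, y not both zero are quantified,
   since then min{vx,vy} is a finite value. *)
definition krasner_norm ::
  "('a \<Rightarrow> 'a \<Rightarrow> 'a set) \<Rightarrow> 'a \<Rightarrow> ('a \<Rightarrow> 'g::linordered_ab_group_add option) \<Rightarrow> 'g set \<Rightarrow> bool" where
  "krasner_norm add zero v \<rho> \<longleftrightarrow>
     initial_segment \<rho> \<and> 0 \<in> \<rho> \<and>
     (\<forall>x y z t m. z \<in> add x y \<longrightarrow> ext_min (v x) (v y) = Some m \<longrightarrow>
        (t \<in> add x y \<longleftrightarrow> (\<forall>s \<in> hsub add zero z t. above_seg (v s) \<rho> m)))"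

definition KVH1 ::
  "('a \<Rightarrow> 'a \<Rightarrow> 'a set) \<Rightarrow> 'a \<Rightarrow> ('a \<Rightarrow> 'g option) \<Rightarrow> bool" where
  "KVH1 add zero v \<longleftrightarrow> (\<forall>x y. zero \<notin> add x y \<longrightarrow> (\<exists>a. v ` add x y = {a}))"

definition krasner_valued_hyperfield ::
  "('a \<Rightarrow> 'a \<Rightarrow> 'a set) \<Rightarrow> ('a \<Rightarrow> 'a \<Rightarrow> 'a) \<Rightarrow> 'a \<Rightarrow> 'a \<Rightarrow>
   ('a \<Rightarrow> 'g::linordered_ab_group_add option) \<Rightarrow> 'g set \<Rightarrow> bool" where
  "krasner_valued_hyperfield add mul zero one v \<rho> \<longleftrightarrow>
     valued_hyperfield add mul zero one v \<and> KVH1 add zero v \<and> krasner_norm add zero v \<rho>"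

definition val_ring :: "('a \<Rightarrow> 'g::linordered_ab_group_add option) \<Rightarrow> 'a set" where
  "val_ring v = {x. ext_le (Some 0) (v x)}"

end

theory Submission
  imports Defs
begin

text \<open>
  Negation is multiplication by \<open>-1\<close>, and \<open>v(-1) = 0\<close> because \<open>(-1)\<^sup>2 = 1\<close>, so \<open>v(-x) = v x\<close>.
  Applying KVH2 with \<open>0 \<in> x - x\<close> then shows that \<open>x - x\<close> consists of the elements \<open>t\<close> with
  \<open>v t > \<rho>\<^sub>v + v x\<close>; in particular \<open>1 - 1 = {t. v t > \<rho>\<^sub>v}\<close>. Since \<open>v\<close> is surjective,
  \<open>x - x \<subseteq> 1 - 1\<close> amounts to \<open>\<rho>\<^sub>v \<subseteq> \<rho>\<^sub>v + v x\<close>. For \<open>v x \<ge> 0\<close> this holds because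
  \<open>\<rho>\<^sub>v\<close> is an initial segment; for \<open>v x < 0\<close> the reverse inclusion always holds, so it would force
  \<open>v x \<in> ig(\<rho>\<^sub>v) = {0}\<close>.
\<close>

lemma canonical_hypergroupD:
  assumes "canonical_hypergroup add zero"
  shows "add x y = add y x" and "add zero x = {x}" and "\<exists>!y. zero \<in> add x y"
proof -
  have "(\<forall>x y. add x y = add y x) \<and> (\<forall>x. add zero x = {x}) \<and> (\<forall>x. \<exists>!y. zero \<in> add x y)"
    using assms unfolding canonical_hypergroup_def by (elim conjE) (intro conjI; assumption)
  then show "add x y = add y x" and "add zero x = {x}" and "\<exists>!y. zero \<in> add x y"
    by blast+
qed

lemma hyperfieldD:
  assumes "hyperfield add mul zero one"
  shows "canonical_hypergroup add zero" and "mul x y = mul y x" and "mul zero x = zero"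
    and "mul x ` add y z = set_add add {mul x y} {mul x z}" and "one \<noteq> zero" and "mul one x = x"
proof -
  have "canonical_hypergroup add zero \<and> (\<forall>x y. mul x y = mul y x) \<and> (\<forall>x. mul zero x = zero) \<and>
    (\<forall>x y z. mul x ` add y z = set_add add {mul x y} {mul x z}) \<and> one \<noteq> zero \<and> (\<forall>x. mul one x = x)"
    using assms unfolding hyperfield_def by (elim conjE) (intro conjI; assumption)
  then show "canonical_hypergroup add zero" and "mul x y = mul y x" and "mul zero x = zero"
    and "mul x ` add y z = set_add add {mul x y} {mul x z}" and "one \<noteq> zero" and "mul one x = x"
    by blast+
qed

lemma valuationD:
  assumes "valuation add mul zero one v"
  shows "surj v" and "v x = None \<longleftrightarrow> x = zero"
    and "v x = Some a \<Longrightarrow> v y = Some b \<Longrightarrow> v (mul x y) = Some (a + b)"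
  using assms unfolding valuation_def by simp_all

lemma krasner_normD:
  assumes "krasner_norm add zero v \<rho>"
  shows "initial_segment \<rho>"
    and "z \<in> add x y \<Longrightarrow> ext_min (v x) (v y) = Some m \<Longrightarrow>
           t \<in> add x y \<longleftrightarrow> (\<forall>s \<in> hsub add zero z t. above_seg (v s) \<rho> m)"
  using assms unfolding krasner_norm_def by blast+

lemma krasner_valued_hyperfieldD:
  assumes "krasner_valued_hyperfield add mul zero one v \<rho>"
  shows "hyperfield add mul zero one" and "valuation add mul zero one v"
    and "krasner_norm add zero v \<rho>"
  using assms unfolding krasner_valued_hyperfield_def valued_hyperfield_def by blast+

lemma zero_in_add_hneg:
  assumes "canonical_hypergroup add zero"
  shows "zero \<in> add x (hneg add zero x)"
  unfolding hneg_def using canonical_hypergroupD(3)[OF assms] by (rule theI')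

lemma hneg_unique:
  assumes "canonical_hypergroup add zero" and "zero \<in> add x y"
  shows "hneg add zero x = y"
  unfolding hneg_def using canonical_hypergroupD(3)[OF assms(1)] assms(2) by (rule the1_equality)

lemma hneg_hneg:
  assumes "canonical_hypergroup add zero"
  shows "hneg add zero (hneg add zero x) = x"
  using zero_in_add_hneg[OF assms, of x]
  by (intro hneg_unique[OF assms]) (simp add: canonical_hypergroupD(1)[OF assms])

lemma hneg_zero:
  assumes "canonical_hypergroup add zero"
  shows "hneg add zero zero = zero"
  by (intro hneg_unique[OF assms]) (simp add: canonical_hypergroupD(2)[OF assms])

lemma hsub_zero_left:
  assumes "canonical_hypergroup add zero"
  shows "hsub add zero zero t = {hneg add zero t}"
  unfolding hsub_def by (rule canonical_hypergroupD(2)[OF assms])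

lemma zero_in_hsub_self:
  assumes "canonical_hypergroup add zero"
  shows "zero \<in> hsub add zero x x"
  unfolding hsub_def by (rule zero_in_add_hneg[OF assms])

lemma hneg_eq_mul_hneg_one:
  assumes "hyperfield add mul zero one"
  shows "hneg add zero x = mul x (hneg add zero one)"
proof -
  note CH = hyperfieldD(1)[OF assms]
  have "mul x ` add one (hneg add zero one) = add (mul x one) (mul x (hneg add zero one))"
    using hyperfieldD(4)[OF assms] by (simp add: set_add_def)
  moreover have "mul x zero = zero" and "mul x one = x"
    using hyperfieldD(2,3,6)[OF assms] by metis+
  ultimately have "zero \<in> add x (mul x (hneg add zero one))"
    using zero_in_add_hneg[OF CH, of one] by (metis imageI)
  then show ?thesis by (rule hneg_unique[OF CH])
qed

lemma valuation_one:
  assumes "hyperfield add mul zero one" and "valuation add mul zero one v"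
  shows "v one = Some 0"
proof -
  obtain a where a: "v one = Some a"
    using valuationD(2)[OF assms(2), of one] hyperfieldD(5)[OF assms(1)] by (cases "v one") simp_all
  have "v (mul one one) = Some (a + a)" by (rule valuationD(3)[OF assms(2) a a])
  with a have "a = 0" by (simp add: hyperfieldD(6)[OF assms(1)])
  with a show ?thesis by simp
qed

lemma valuation_hneg_one:
  assumes "hyperfield add mul zero one" and "valuation add mul zero one v"
  shows "v (hneg add zero one) = Some 0"
proof -
  note CH = hyperfieldD(1)[OF assms(1)]
  let ?m = "hneg add zero one"
  have "mul ?m ?m = hneg add zero ?m" by (rule hneg_eq_mul_hneg_one[OF assms(1), symmetric])
  also have "\<dots> = one" by (rule hneg_hneg[OF CH])
  finally have "mul ?m ?m = one" .
  moreover have "?m \<noteq> zero"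
  proof
    assume "?m = zero"
    then have "one = zero" using hneg_hneg[OF CH, of one] hneg_zero[OF CH] by simp
    with hyperfieldD(5)[OF assms(1)] show False ..
  qed
  then obtain b where b: "v ?m = Some b"
    using valuationD(2)[OF assms(2), of ?m] by (cases "v ?m") simp_all
  ultimately have "b + b = 0"
    using valuationD(3)[OF assms(2) b b] valuation_one[OF assms] by simp
  with b show ?thesis by simp
qed

lemma valuation_hneg:
  assumes "hyperfield add mul zero one" and "valuation add mul zero one v"
  shows "v (hneg add zero x) = v x"
proof (cases "v x")
  case None
  then show ?thesis
    using valuationD(2)[OF assms(2)] hneg_zero[OF hyperfieldD(1)[OF assms(1)]] by simp
next
  case (Some g)
  have "v (hneg add zero x) = v (mul x (hneg add zero one))"
    using hneg_eq_mul_hneg_one[OF assms(1), of x] by (rule arg_cong)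
  also have "\<dots> = v x"
    using valuationD(3)[OF assms(2) Some valuation_hneg_one[OF assms]] Some by simp
  finally show ?thesis .
qed

text \<open>Both \<open>x\<close> and \<open>-x\<close> have value \<open>g\<close>, and \<open>0 \<in> x - x\<close> is the reference point \<open>z\<close> in KVH2.\<close>

lemma hsub_self_eq_above_seg:
  assumes "krasner_valued_hyperfield add mul zero one v \<rho>" and "v x = Some g"
  shows "hsub add zero x x = {t. above_seg (v t) \<rho> g}"
proof -
  note HF = krasner_valued_hyperfieldD(1)[OF assms(1)]
    and VA = krasner_valued_hyperfieldD(2)[OF assms(1)]
    and KN = krasner_valued_hyperfieldD(3)[OF assms(1)]
  note CH = hyperfieldD(1)[OF HF]
  have min_g: "ext_min (v x) (v (hneg add zero x)) = Some g"
    using valuation_hneg[OF HF VA] assms(2) by simp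
  have "t \<in> hsub add zero x x \<longleftrightarrow> above_seg (v t) \<rho> g" for t
    using krasner_normD(2)[OF KN zero_in_add_hneg[OF CH] min_g, of t]
    by (simp add: hsub_def[symmetric] hsub_zero_left[OF CH] valuation_hneg[OF HF VA])
  then show ?thesis by blast
qed

lemma above_seg_subset_iff:
  assumes "surj v"
  shows "{t. above_seg (v t) \<rho> g} \<subseteq> {t. above_seg (v t) \<rho> h}
           \<longleftrightarrow> seg_shift \<rho> h \<subseteq> seg_shift \<rho> g"
proof
  assume sub: "{t. above_seg (v t) \<rho> g} \<subseteq> {t. above_seg (v t) \<rho> h}"
  show "seg_shift \<rho> h \<subseteq> seg_shift \<rho> g"
  proof
    fix d assume d: "d \<in> seg_shift \<rho> h"
    obtain t where t: "v t = Some d" using assms by (metis surjD)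
    show "d \<in> seg_shift \<rho> g"
    proof (rule ccontr)
      assume "d \<notin> seg_shift \<rho> g"
      with t have "t \<in> {t. above_seg (v t) \<rho> g}" by simp
      with sub have "above_seg (v t) \<rho> h" by blast
      with t d show False by simp
    qed
  qed
next
  assume "seg_shift \<rho> h \<subseteq> seg_shift \<rho> g"
  then show "{t. above_seg (v t) \<rho> g} \<subseteq> {t. above_seg (v t) \<rho> h}"
    by (force elim: above_seg.elims)
qed

lemma seg_shift_zero [simp]: "seg_shift \<rho> 0 = \<rho>"
  by (simp add: seg_shift_def)

lemma subset_seg_shift_of_nonneg:
  fixes \<rho> :: "'g::linordered_ab_group_add set"
  assumes "initial_segment \<rho>" and "0 \<le> g"
  shows "\<rho> \<subseteq> seg_shift \<rho> g"
proof
  fix d assume "d \<in> \<rho>"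
  moreover have "d - g \<le> d" using assms(2) by simp
  ultimately have "d - g \<in> \<rho>" using assms(1) unfolding initial_segment_def by (metis order_le_less)
  then show "d \<in> seg_shift \<rho> g" unfolding seg_shift_def by (metis diff_add_cancel imageI)
qed

lemma seg_shift_subset_of_neg:
  fixes \<rho> :: "'g::linordered_ab_group_add set"
  assumes "initial_segment \<rho>" and "g < 0"
  shows "seg_shift \<rho> g \<subseteq> \<rho>"
  using assms unfolding seg_shift_def initial_segment_def by auto

lemma subset_seg_shift_iff_nonneg:
  fixes \<rho> :: "'g::linordered_ab_group_add set"
  assumes "initial_segment \<rho>" and "ig \<rho> = {0}"
  shows "\<rho> \<subseteq> seg_shift \<rho> g \<longleftrightarrow> 0 \<le> g"
proof
  assume sub: "\<rho> \<subseteq> seg_shift \<rho> g"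
  show "0 \<le> g"
  proof (rule ccontr)
    assume "\<not> 0 \<le> g"
    then have "seg_shift \<rho> g = \<rho>"
      using sub seg_shift_subset_of_neg[OF assms(1)] by force
    then have "g \<in> ig \<rho>" by (simp add: ig_def)
    with assms(2) \<open>\<not> 0 \<le> g\<close> show False by simp
  qed
qed (rule subset_seg_shift_of_nonneg[OF assms(1)])

theorem corollary6p4:
  fixes add :: "'a \<Rightarrow> 'a \<Rightarrow> 'a set" and mul :: "'a \<Rightarrow> 'a \<Rightarrow> 'a"
    and zero one :: 'a and v :: "'a \<Rightarrow> 'g::linordered_ab_group_add option"
    and \<rho> :: "'g set"
  assumes "krasner_valued_hyperfield add mul zero one v \<rho>"
    and "ig \<rho> = {0}"
  shows "val_ring v = {x. hsub add zero x x \<subseteq> hsub add zero one one}"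
proof -
  note HF = krasner_valued_hyperfieldD(1)[OF assms(1)]
    and VA = krasner_valued_hyperfieldD(2)[OF assms(1)]
  note CH = hyperfieldD(1)[OF HF]
    and init = krasner_normD(1)[OF krasner_valued_hyperfieldD(3)[OF assms(1)]]
  have one_minus_one: "hsub add zero one one = {t. above_seg (v t) \<rho> 0}"
    by (rule hsub_self_eq_above_seg[OF assms(1) valuation_one[OF HF VA]])
  have "x \<in> val_ring v \<longleftrightarrow> hsub add zero x x \<subseteq> hsub add zero one one" for x
  proof (cases "v x")
    case None
    then have "x = zero" using valuationD(2)[OF VA] by simp
    then show ?thesis
      using None hsub_zero_left[OF CH] hneg_zero[OF CH] zero_in_hsub_self[OF CH]
      by (simp add: val_ring_def)
  next
    case (Some g)
    have "x \<in> val_ring v \<longleftrightarrow> 0 \<le> g" using Some by (simp add: val_ring_def)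
    also have "\<dots> \<longleftrightarrow> \<rho> \<subseteq> seg_shift \<rho> g" using subset_seg_shift_iff_nonneg[OF init assms(2)] by simp
    also have "\<dots> \<longleftrightarrow> hsub add zero x x \<subseteq> hsub add zero one one"
      using above_seg_subset_iff[OF valuationD(1)[OF VA], of \<rho> g 0]
      by (simp add: hsub_self_eq_above_seg[OF assms(1) Some] one_minus_one)
    finally show ?thesis .
  qed
  then show ?thesis by blast
qed

end
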